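(* Every LSGA net is a structural conflict net.
   Context: A Petri net $N=(S,T,F,M_0,\ell)$ has disjoint $S,T$, $F:(S\times T)\cup(T\times S)\to\mathbb N$, $M_0\in\mathbb N^S$, labelling $\ell$. ${}^\bullet x(y)=F(y,x)$, $x^\bullet(y)=F(x,y)$. For a finite nonempty multiset $G$ of transitions, $M[G\rangle M'$ iff ${}^\bullet G\le M$ and $M'=M-{}^\bullet G+G^\bullet$; $t\smile u$ iff $M[\{t\}+\{u\}\rangle$ for some reachable $M$. $N$ is a structural conflict net iff $t\smile u$ implies ${}^\bullet t\cap{}^\bullet u=\emptyset$. A component with interface is $(N,I,O)$ with $I,O\subseteq S$, $I\cap O=\emptyset$ and $o^\bullet=\emptyset$ for $o\in O$; it is sequential iff there is $Q\subseteq S\setminus(I\cup O)$ with $|{}^\bullet t\restriction Q|=|t^\bullet\restriction Q|=1$ for all $t\in T$ and $|M_0\restriction Q|=1$. For components $((S_k,T_k,F_k,M_{0k},\ell_k),I_k,O_k)$, $k\in K$, with $(S_k\cup T_k)\cap(S_l\cup T_l)=(I_k\cup O_k)\cap(I_l\cup O_l)$ and $I_k\cap I_l=\emptyset$ for $k\ne l$, the asynchronous parallel composition is $((\bigcup S_k,\bigcup T_k,\bigcup F_k,\sum M_{0k},\bigcup\ell_k),\bigcup I_k,\bigcup O_k\setminus\bigcup I_k)$. $N$ is an LSGA net iff $(N,I,O)$ equals the asynchronous parallel composition of some family of sequential components, for some $I,O$. *)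

theory Defs
  imports Main "HOL-Library.Multiset"
begin

text \<open>Places have type 's and transitions type 't, so S and T
  are automatically disjoint. The flow function F is split into
  pre s t = F(s,t) and post t s = F(t,s). Markings are functions 's => nat
  which are 0 outside the place set.\<close>

record ('s,'t,'l) pnet =
  places :: "'s set"
  trans  :: "'t set"
  pre    :: "'s \<Rightarrow> 't \<Rightarrow> nat"
  post   :: "'t \<Rightarrow> 's \<Rightarrow> nat"
  m0     :: "'s \<Rightarrow> nat"
  lab    :: "'t \<Rightarrow> 'l"

definition wf_net :: "('s,'t,'l) pnet \<Rightarrow> bool" where
  "wf_net N \<longleftrightarrow>
     (\<forall>s t. pre N s t \<noteq> 0 \<longrightarrow> s \<in> places N \<and> t \<in> trans N) \<and>
     (\<forall>t s. post N t s \<noteq> 0 \<longrightarrow> s \<in> places N \<and> t \<in> trans N) \<and>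
     (\<forall>s. m0 N s \<noteq> 0 \<longrightarrow> s \<in> places N)"

definition pre_ms :: "('s,'t,'l) pnet \<Rightarrow> 't multiset \<Rightarrow> 's \<Rightarrow> nat" where
  "pre_ms N G s = (\<Sum>t\<in>#G. pre N s t)"

definition post_ms :: "('s,'t,'l) pnet \<Rightarrow> 't multiset \<Rightarrow> 's \<Rightarrow> nat" where
  "post_ms N G s = (\<Sum>t\<in>#G. post N t s)"

definition fires :: "('s,'t,'l) pnet \<Rightarrow> ('s \<Rightarrow> nat) \<Rightarrow> 't multiset \<Rightarrow> ('s \<Rightarrow> nat) \<Rightarrow> bool" where
  "fires N M G M' \<longleftrightarrow>
     G \<noteq> {#} \<and> set_mset G \<subseteq> trans N \<and>
     (\<forall>s. pre_ms N G s \<le> M s) \<and>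
     M' = (\<lambda>s. M s - pre_ms N G s + post_ms N G s)"

inductive_set reachable :: "('s,'t,'l) pnet \<Rightarrow> ('s \<Rightarrow> nat) set" for N where
  init: "m0 N \<in> reachable N"
| step: "M \<in> reachable N \<Longrightarrow> fires N M G M' \<Longrightarrow> M' \<in> reachable N"

definition conc :: "('s,'t,'l) pnet \<Rightarrow> 't \<Rightarrow> 't \<Rightarrow> bool" where
  "conc N t u \<longleftrightarrow> (\<exists>M \<in> reachable N. \<exists>M'. fires N M ({#t#} + {#u#}) M')"

definition preset :: "('s,'t,'l) pnet \<Rightarrow> 't \<Rightarrow> 's set" where
  "preset N t = {s. pre N s t \<noteq> 0}"

definition structural_conflict_net :: "('s,'t,'l) pnet \<Rightarrow> bool" where
  "structural_conflict_net N \<longleftrightarrow>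
     (\<forall>t u. conc N t u \<longrightarrow> preset N t \<inter> preset N u = {})"

definition component :: "('s,'t,'l) pnet \<Rightarrow> 's set \<Rightarrow> 's set \<Rightarrow> bool" where
  "component N Inp Out \<longleftrightarrow> wf_net N \<and> Inp \<subseteq> places N \<and> Out \<subseteq> places N \<and> Inp \<inter> Out = {} \<and>
     (\<forall>p\<in>Out. \<forall>t. pre N p t = 0)"

definition size_restr_one :: "'s set \<Rightarrow> ('s \<Rightarrow> nat) \<Rightarrow> bool" where
  "size_restr_one Q f \<longleftrightarrow> (\<exists>q\<in>Q. f q = 1 \<and> (\<forall>q'\<in>Q. q' \<noteq> q \<longrightarrow> f q' = 0))"

definition sequential :: "('s,'t,'l) pnet \<Rightarrow> 's set \<Rightarrow> 's set \<Rightarrow> bool" where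
  "sequential N Inp Out \<longleftrightarrow> component N Inp Out \<and>
     (\<exists>Q. Q \<subseteq> places N - (Inp \<union> Out) \<and>
          (\<forall>t\<in>trans N. size_restr_one Q (\<lambda>s. pre N s t) \<and> size_restr_one Q (\<lambda>s. post N t s)) \<and>
          size_restr_one Q (m0 N))"

text \<open>Since places and transitions have different types, the condition
  (S_k u T_k) n (S_l u T_l) = (I_k u O_k) n (I_l u O_l) splits into a condition on
  places and disjointness of transition sets.\<close>
definition async_comp_eq ::
  "'k set \<Rightarrow> ('k \<Rightarrow> ('s,'t,'l) pnet) \<Rightarrow> ('k \<Rightarrow> 's set) \<Rightarrow> ('k \<Rightarrow> 's set) \<Rightarrow>
   ('s,'t,'l) pnet \<Rightarrow> 's set \<Rightarrow> 's set \<Rightarrow> bool" where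
  "async_comp_eq K C IC OC N Inp Out \<longleftrightarrow>
     (\<forall>k\<in>K. \<forall>l\<in>K. k \<noteq> l \<longrightarrow>
        places (C k) \<inter> places (C l) = (IC k \<union> OC k) \<inter> (IC l \<union> OC l) \<and>
        trans (C k) \<inter> trans (C l) = {} \<and>
        IC k \<inter> IC l = {}) \<and>
     (\<forall>s. finite {k\<in>K. m0 (C k) s \<noteq> 0}) \<and>
     places N = (\<Union>k\<in>K. places (C k)) \<and>
     trans N = (\<Union>k\<in>K. trans (C k)) \<and>
     (\<forall>s t. pre N s t = (\<Sum>k\<in>{k\<in>K. t \<in> trans (C k)}. pre (C k) s t)) \<and>
     (\<forall>t s. post N t s = (\<Sum>k\<in>{k\<in>K. t \<in> trans (C k)}. post (C k) t s)) \<and>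
     (\<forall>s. m0 N s = (\<Sum>k\<in>{k\<in>K. m0 (C k) s \<noteq> 0}. m0 (C k) s)) \<and>
     (\<forall>k\<in>K. \<forall>t\<in>trans (C k). lab N t = lab (C k) t) \<and>
     Inp = (\<Union>k\<in>K. IC k) \<and>
     Out = (\<Union>k\<in>K. OC k) - (\<Union>k\<in>K. IC k)"

definition LSGA_by ::
  "'k set \<Rightarrow> ('k \<Rightarrow> ('s,'t,'l) pnet) \<Rightarrow> ('k \<Rightarrow> 's set) \<Rightarrow> ('k \<Rightarrow> 's set) \<Rightarrow>
   ('s,'t,'l) pnet \<Rightarrow> 's set \<Rightarrow> 's set \<Rightarrow> bool" where
  "LSGA_by K C IC OC N Inp Out \<longleftrightarrow>
     (\<forall>k\<in>K. sequential (C k) (IC k) (OC k)) \<and> async_comp_eq K C IC OC N Inp Out"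

end

theory Submission
  imports Defs
begin

text \<open>Each sequential component k carries a set Q k of private places holding exactly one
  token at the initial marking. Every transition of k moves that token inside Q k, and no
  other transition touches Q k, so every reachable marking has exactly one token on Q k.
  Hence two transitions of the same component are never concurrently enabled. Transitions
  of different components can only share interface places in their presets; these cannot be
  output places, which have empty postsets, so they would be common input places, which the
  composition forbids.\<close>

lemma pre_ms_add_mset [simp]: "pre_ms N (add_mset t G) s = pre N s t + pre_ms N G s"
  by (simp add: pre_ms_def)

lemma post_ms_add_mset [simp]: "post_ms N (add_mset t G) s = post N t s + post_ms N G s"
  by (simp add: post_ms_def)

lemma pre_ms_eq_0: "(\<And>t. t \<in># G \<Longrightarrow> pre N s t = 0) \<Longrightarrow> pre_ms N G s = 0"
  by (simp add: pre_ms_def)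

lemma post_ms_eq_0: "(\<And>t. t \<in># G \<Longrightarrow> post N t s = 0) \<Longrightarrow> post_ms N G s = 0"
  by (simp add: post_ms_def)

lemma size_restr_one_cong:
  "(\<And>q. q \<in> Q \<Longrightarrow> f q = g q) \<Longrightarrow> size_restr_one Q f = size_restr_one Q g"
  by (simp add: size_restr_one_def)

lemma size_restr_one_not_enabled_twice:
  assumes M: "size_restr_one Q M"
    and t: "size_restr_one Q (\<lambda>s. pre N s t)" and u: "size_restr_one Q (\<lambda>s. pre N s u)"
    and enabled: "\<forall>s. pre_ms N (add_mset t (add_mset u G)) s \<le> M s"
  shows False
proof -
  obtain q where q: "q \<in> Q" "M q = 1" "\<forall>q'\<in>Q. q' \<noteq> q \<longrightarrow> M q' = 0"
    using M unfolding size_restr_one_def by blast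
  obtain a where a: "a \<in> Q" "pre N a t = 1" using t unfolding size_restr_one_def by blast
  obtain b where b: "b \<in> Q" "pre N b u = 1" using u unfolding size_restr_one_def by blast
  have "a = q" using enabled[rule_format, of a] a q by force
  moreover have "b = q" using enabled[rule_format, of b] b q by force
  ultimately have "2 \<le> pre_ms N (add_mset t (add_mset u G)) q" using a b by simp
  then show False using enabled[rule_format, of q] q by simp
qed

definition moves_one_token :: "('s,'t,'l) pnet \<Rightarrow> 's set \<Rightarrow> 't \<Rightarrow> bool" where
  "moves_one_token N Q t \<longleftrightarrow>
     size_restr_one Q (\<lambda>s. pre N s t) \<and> size_restr_one Q (\<lambda>s. post N t s)"

definition untouched_by :: "('s,'t,'l) pnet \<Rightarrow> 's set \<Rightarrow> 't \<Rightarrow> bool" where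
  "untouched_by N Q t \<longleftrightarrow> (\<forall>q\<in>Q. pre N q t = 0 \<and> post N t q = 0)"

lemma fires_preserves_size_restr_one:
  assumes trans: "\<And>t. t \<in> trans N \<Longrightarrow> moves_one_token N Q t \<or> untouched_by N Q t"
    and M: "size_restr_one Q M" and fires: "fires N M G M'"
  shows "size_restr_one Q M'"
proof -
  have G: "set_mset G \<subseteq> trans N" and enabled: "\<forall>s. pre_ms N G s \<le> M s"
    and M': "M' = (\<lambda>s. M s - pre_ms N G s + post_ms N G s)"
    using fires unfolding fires_def by auto
  have untouched_unchanged: "size_restr_one Q (\<lambda>s. M s - pre_ms N H s + post_ms N H s)"
    if H: "\<forall>u\<in>#H. untouched_by N Q u" for H
  proof -
    have "M q - pre_ms N H q + post_ms N H q = M q" if "q \<in> Q" for q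
      using H that by (simp add: untouched_by_def pre_ms_eq_0 post_ms_eq_0)
    then have "size_restr_one Q (\<lambda>s. M s - pre_ms N H s + post_ms N H s) = size_restr_one Q M"
      by (rule size_restr_one_cong)
    then show ?thesis using M by simp
  qed
  show ?thesis
  proof (cases "\<forall>u\<in>#G. untouched_by N Q u")
    case True
    then show ?thesis using untouched_unchanged M' by simp
  next
    case False
    then obtain t where "t \<in># G" and "\<not> untouched_by N Q t" by blast
    then have t: "moves_one_token N Q t" using G trans by blast
    obtain G' where G_split: "G = add_mset t G'" using \<open>t \<in># G\<close> by (metis mset_add)
    have G': "untouched_by N Q u" if u: "u \<in># G'" for u
    proof (rule ccontr)
      assume "\<not> untouched_by N Q u"
      moreover have "u \<in> trans N" using u G G_split by auto
      ultimately have "moves_one_token N Q u" using trans by blast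
      moreover obtain G'' where "G' = add_mset u G''" using u by (metis mset_add)
      ultimately show False
        using size_restr_one_not_enabled_twice[OF M, of N t u G''] t enabled G_split
        by (simp add: moves_one_token_def)
    qed
    obtain q where q: "q \<in> Q" "M q = 1" "\<forall>q'\<in>Q. q' \<noteq> q \<longrightarrow> M q' = 0"
      using M unfolding size_restr_one_def by blast
    obtain a where a: "a \<in> Q" "pre N a t = 1" "\<forall>q'\<in>Q. q' \<noteq> a \<longrightarrow> pre N q' t = 0"
      using t unfolding moves_one_token_def size_restr_one_def by blast
    have "1 \<le> M a" using enabled a(2) G_split by (metis add_leE pre_ms_add_mset)
    then have "a = q" using a(1) q by fastforce
    have "M' p = post N t p" if p: "p \<in> Q" for p
    proof -
      have "pre_ms N G' p = 0" "post_ms N G' p = 0"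
        using G' p by (simp_all add: untouched_by_def pre_ms_eq_0 post_ms_eq_0)
      moreover have "M p = pre N p t"
        using p q a \<open>a = q\<close> by (cases "p = q") simp_all
      ultimately show ?thesis unfolding M' G_split by simp
    qed
    then have "size_restr_one Q M' = size_restr_one Q (\<lambda>s. post N t s)"
      by (rule size_restr_one_cong)
    then show ?thesis using t by (simp add: moves_one_token_def)
  qed
qed

lemma reachable_size_restr_one:
  assumes "\<And>t. t \<in> trans N \<Longrightarrow> moves_one_token N Q t \<or> untouched_by N Q t"
    and "size_restr_one Q (m0 N)" and "M \<in> reachable N"
  shows "size_restr_one Q M"
  using assms(3) by induction (use assms(1,2) fires_preserves_size_restr_one in blast)+

lemma conc_not_moves_one_token:
  assumes "conc N t u" and "\<And>M. M \<in> reachable N \<Longrightarrow> size_restr_one Q M"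
    and "moves_one_token N Q t" and "moves_one_token N Q u"
  shows False
proof -
  obtain M M' where M: "M \<in> reachable N" and "fires N M ({#t#} + {#u#}) M'"
    using assms(1) unfolding conc_def by blast
  then have "\<forall>s. pre_ms N (add_mset u (add_mset t {#})) s \<le> M s"
    by (simp add: fires_def)
  then show False
    using size_restr_one_not_enabled_twice[OF assms(2)[OF M], of N u t "{#}"] assms(3,4)
    unfolding moves_one_token_def by blast
qed

context
  fixes K :: "'k set" and C :: "'k \<Rightarrow> ('s,'t,'l) pnet"
    and IC OC :: "'k \<Rightarrow> 's set" and N :: "('s,'t,'l) pnet" and Inp Out :: "'s set"
  assumes async: "async_comp_eq K C IC OC N Inp Out"
    and components: "\<forall>k\<in>K. component (C k) (IC k) (OC k)"
begin

lemma async_comp_pairwise: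
  assumes "k \<in> K" "l \<in> K" "k \<noteq> l"
  shows "places (C k) \<inter> places (C l) = (IC k \<union> OC k) \<inter> (IC l \<union> OC l)"
    and "trans (C k) \<inter> trans (C l) = {}" and "IC k \<inter> IC l = {}"
proof -
  have "\<forall>k\<in>K. \<forall>l\<in>K. k \<noteq> l \<longrightarrow>
      places (C k) \<inter> places (C l) = (IC k \<union> OC k) \<inter> (IC l \<union> OC l) \<and>
      trans (C k) \<inter> trans (C l) = {} \<and> IC k \<inter> IC l = {}"
    using async by (simp add: async_comp_eq_def)
  then show "places (C k) \<inter> places (C l) = (IC k \<union> OC k) \<inter> (IC l \<union> OC l)"
    and "trans (C k) \<inter> trans (C l) = {}" and "IC k \<inter> IC l = {}"
    using assms by auto
qed

lemma async_comp_trans: "t \<in> trans N \<longleftrightarrow> (\<exists>k\<in>K. t \<in> trans (C k))"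
  using async unfolding async_comp_eq_def by blast

lemma async_comp_owner:
  "k \<in> K \<Longrightarrow> t \<in> trans (C k) \<Longrightarrow> {j \<in> K. t \<in> trans (C j)} = {k}"
  using async_comp_pairwise(2) by blast

lemma async_comp_pre: "k \<in> K \<Longrightarrow> t \<in> trans (C k) \<Longrightarrow> pre N s t = pre (C k) s t"
  using async async_comp_owner unfolding async_comp_eq_def by simp

lemma async_comp_post: "k \<in> K \<Longrightarrow> t \<in> trans (C k) \<Longrightarrow> post N t s = post (C k) t s"
  using async async_comp_owner unfolding async_comp_eq_def by simp

lemma async_comp_moves_one_token:
  "k \<in> K \<Longrightarrow> t \<in> trans (C k) \<Longrightarrow> moves_one_token (C k) Q t \<Longrightarrow> moves_one_token N Q t"
  using async_comp_pre async_comp_post by (simp add: moves_one_token_def)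

lemma async_comp_wf: "k \<in> K \<Longrightarrow> wf_net (C k)"
  using components by (simp add: component_def)

lemma private_place_not_shared:
  assumes "k \<in> K" "j \<in> K" "j \<noteq> k" "q \<in> places (C k) - (IC k \<union> OC k)"
  shows "q \<notin> places (C j)"
  using assms async_comp_pairwise(1) by blast

lemma private_places_untouched:
  assumes k: "k \<in> K" and Q: "Q \<subseteq> places (C k) - (IC k \<union> OC k)"
    and t: "t \<in> trans N" "t \<notin> trans (C k)"
  shows "untouched_by N Q t"
proof -
  obtain j where j: "j \<in> K" "t \<in> trans (C j)" and "j \<noteq> k"
    using t async_comp_trans by blast
  have "pre (C j) q t = 0 \<and> post (C j) t q = 0" if "q \<in> Q" for q
  proof -
    have "q \<notin> places (C j)" using k Q j(1) \<open>j \<noteq> k\<close> that private_place_not_shared by blast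
    then show ?thesis using async_comp_wf[OF j(1)] unfolding wf_net_def by blast
  qed
  then show ?thesis
    using async_comp_pre[OF j] async_comp_post[OF j] unfolding untouched_by_def by simp
qed

lemma private_place_m0:
  assumes k: "k \<in> K" and q: "q \<in> places (C k) - (IC k \<union> OC k)"
  shows "m0 N q = m0 (C k) q"
proof -
  have "{j \<in> K. m0 (C j) q \<noteq> 0} \<subseteq> {k}"
    using k q private_place_not_shared async_comp_wf unfolding wf_net_def by blast
  then have "{j \<in> K. m0 (C j) q \<noteq> 0} = {} \<or> {j \<in> K. m0 (C j) q \<noteq> 0} = {k}"
    by blast
  then show ?thesis
    using async k unfolding async_comp_eq_def by auto
qed

lemma sequential_component_one_token:
  assumes k: "k \<in> K" and Q: "Q \<subseteq> places (C k) - (IC k \<union> OC k)"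
    and Q_trans: "\<And>t. t \<in> trans (C k) \<Longrightarrow> moves_one_token (C k) Q t"
    and Q_m0: "size_restr_one Q (m0 (C k))"
    and M: "M \<in> reachable N"
  shows "size_restr_one Q M"
proof (rule reachable_size_restr_one[OF _ _ M])
  fix t assume "t \<in> trans N"
  then show "moves_one_token N Q t \<or> untouched_by N Q t"
    using Q_trans k Q private_places_untouched async_comp_moves_one_token by blast
next
  show "size_restr_one Q (m0 N)"
    using Q_m0 size_restr_one_cong[of Q "m0 N" "m0 (C k)"] private_place_m0[OF k] Q by blast
qed

lemma preplace_in_component:
  assumes k: "k \<in> K" "t \<in> trans (C k)" and s: "s \<in> preset N t"
  shows "s \<in> places (C k) - OC k"
proof -
  have pre: "pre (C k) s t \<noteq> 0"
    using s async_comp_pre[OF k] by (simp add: preset_def)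
  have "s \<in> places (C k)"
    using pre async_comp_wf[OF k(1)] unfolding wf_net_def by blast
  moreover have "s \<notin> OC k"
    using pre components k(1) unfolding component_def by auto
  ultimately show ?thesis by blast
qed

lemma shared_preplace_same_component:
  assumes k: "k \<in> K" "t \<in> trans (C k)" and l: "l \<in> K" "u \<in> trans (C l)"
    and s: "s \<in> preset N t \<inter> preset N u"
  shows "k = l"
proof (rule ccontr)
  assume "k \<noteq> l"
  have "s \<in> (places (C k) - OC k) \<inter> (places (C l) - OC l)"
    using s preplace_in_component[OF k] preplace_in_component[OF l] by blast
  then have "s \<in> IC k \<inter> IC l"
    using async_comp_pairwise(1)[OF k(1) l(1) \<open>k \<noteq> l\<close>] by blast
  then show False
    using async_comp_pairwise(3)[OF k(1) l(1) \<open>k \<noteq> l\<close>] by blast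
qed

end

theorem corollary4p14:
  fixes N :: "('s,'t,'l) pnet"
    and K :: "'k set" and C :: "'k \<Rightarrow> ('s,'t,'l) pnet"
    and IC OC :: "'k \<Rightarrow> 's set" and Inp Out :: "'s set"
  assumes "LSGA_by K C IC OC N Inp Out"
  shows "structural_conflict_net N"
  unfolding structural_conflict_net_def
proof (intro allI impI)
  fix t u assume conc: "conc N t u"
  have async: "async_comp_eq K C IC OC N Inp Out"
    and seq: "\<And>k. k \<in> K \<Longrightarrow> sequential (C k) (IC k) (OC k)"
    using assms by (auto simp: LSGA_by_def)
  then have components: "\<forall>k\<in>K. component (C k) (IC k) (OC k)"
    by (simp add: sequential_def)
  note async_comp = async_comp_trans[OF async components]
    shared_preplace_same_component[OF async components]
    async_comp_moves_one_token[OF async components]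
    sequential_component_one_token[OF async components]
  obtain k l where k: "k \<in> K" "t \<in> trans (C k)" and l: "l \<in> K" "u \<in> trans (C l)"
    using conc async_comp(1) by (auto simp: conc_def fires_def)
  obtain Q where Q: "Q \<subseteq> places (C k) - (IC k \<union> OC k)"
    and Q_trans: "\<And>v. v \<in> trans (C k) \<Longrightarrow> moves_one_token (C k) Q v"
    and Q_m0: "size_restr_one Q (m0 (C k))"
    using seq[OF k(1)] unfolding sequential_def moves_one_token_def by blast
  show "preset N t \<inter> preset N u = {}"
  proof (rule ccontr)
    assume "preset N t \<inter> preset N u \<noteq> {}"
    then have "u \<in> trans (C k)" using async_comp(2)[OF k l] l by blast
    then show False
      using conc_not_moves_one_token[OF conc] async_comp(3) k Q_trans
        async_comp(4)[OF k(1) Q Q_trans Q_m0] by blast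
  qed
qed

end
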